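(* Let $n\ge 2$, $p=n-1$, and let $m_0,\dots,m_p,m_n$ and the integers $q,r,q_z,r_z,\varepsilon,\upsilon,w$ be as in the context. Let $I\subseteq K[x_0,\dots,x_n]$ ($K$ a field) be the monomial ideal generated by $x_ix_p^{q}$ for $r\le i\le p$; $x_jx_p^{\,q-q_z-\varepsilon}x_n^{\upsilon-w}$ for $\varepsilon p+r-r_z\le j\le p$; $x_n^{\upsilon}$; $x_ix_j$ for $1\le i\le j\le p-1$. (This ideal $I$ is the initial ideal $\mathrm{in}(P)$ of the defining ideal $P$ of the monomial curve $x_i=t^{m_i}$, i.e. $P=\ker(K[x_0,\dots,x_n]\to K[t],\ x_i\mapsto t^{m_i})$, with respect to the grevlex order with $x_0<x_1<\dots<x_n$ refined by the grading $\mathrm{wt}(x_i)=m_i$.) Then $I$ is Ratliff-Rush closed, i.e. $\widetilde{I}=I$.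
   Context: Ratliff-Rush closure: for an ideal $I$ of a commutative Noetherian ring $R$ containing a nonzerodivisor, $\widetilde I=\bigcup_{k\ge1}(I^{k+1}:I^k)$, where $I^{k+1}:I^k=\{x\in R: xI^k\subseteq I^{k+1}\}$; $I$ is Ratliff-Rush closed if $\widetilde I=I$. Setup: $n\ge2$, $p=n-1$; $m_0<m_1<\dots<m_p$ are positive integers forming an arithmetic sequence, $m_n$ is an arbitrary positive integer, $\gcd(m_0,\dots,m_n)=1$, and $m_0,\dots,m_p,m_n$ minimally generate the numerical semigroup $\Gamma=\sum_{i=0}^n\mathbb N_0m_i$. Put $\Gamma'=\sum_{i=0}^p\mathbb N_0 m_i$. For an integer $t\ge0$ define $q_t\in\mathbb Z$, $r_t\in[1,p]$ by $t=q_tp+r_t$, and $g_t=q_tm_p+m_{r_t}\in\Gamma'$. Let $S=\{\gamma\in\Gamma:\gamma-m_0\notin\Gamma\}$, $u=\min\{t\ge0: g_t\notin S\}$, $\upsilon=\min\{b\ge1: bm_n\in\Gamma'\}$. There are unique integers $w\in[0,\upsilon-1]$, $z\in[0,u-1]$, $\lambda\ge1$, $\mu\ge0$ with $g_u=\lambda m_0+wm_n$ and $\upsilon m_n=\mu m_0+g_z$. Set $q=q_u$, $r=r_u$, and $\varepsilon=0$ if $r>r_z$, $\varepsilon=1$ if $r\le r_z$. *)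

theory Defs
  imports Main "HOL-Library.Poly_Mapping"
begin

type_synonym 'k mpoly = "(nat \<Rightarrow>\<^sub>0 nat) \<Rightarrow>\<^sub>0 'k"

definition polyring :: "nat \<Rightarrow> 'k::field mpoly set" where
  "polyring n = {f. \<forall>e \<in> Poly_Mapping.keys f. Poly_Mapping.keys e \<subseteq> {0..n}}"

definition var :: "nat \<Rightarrow> 'k::field mpoly" where
  "var i = Poly_Mapping.single (Poly_Mapping.single i 1) 1"

definition is_ideal :: "'a::comm_ring_1 set \<Rightarrow> 'a set \<Rightarrow> bool" where
  "is_ideal R J \<longleftrightarrow> J \<subseteq> R \<and> 0 \<in> J \<and> (\<forall>a\<in>J. \<forall>b\<in>J. a + b \<in> J)
      \<and> (\<forall>r\<in>R. \<forall>a\<in>J. r * a \<in> J)"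

definition ideal_gen :: "'a::comm_ring_1 set \<Rightarrow> 'a set \<Rightarrow> 'a set" where
  "ideal_gen R G = \<Inter> {J. is_ideal R J \<and> G \<subseteq> J}"

definition ideal_pow :: "'a::comm_ring_1 set \<Rightarrow> 'a set \<Rightarrow> nat \<Rightarrow> 'a set" where
  "ideal_pow R I k = ideal_gen R {prod_list xs | xs. length xs = k \<and> set xs \<subseteq> I}"

definition colon :: "'a::comm_ring_1 set \<Rightarrow> 'a set \<Rightarrow> 'a set \<Rightarrow> 'a set" where
  "colon R J L = {x \<in> R. \<forall>y \<in> L. x * y \<in> J}"

definition ratliff_rush :: "'a::comm_ring_1 set \<Rightarrow> 'a set \<Rightarrow> 'a set" where
  "ratliff_rush R I = (\<Union>k\<in>{1..}. colon R (ideal_pow R I (k+1)) (ideal_pow R I k))"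

definition in_sg :: "(nat \<Rightarrow> nat) \<Rightarrow> nat set \<Rightarrow> int \<Rightarrow> bool" where
  "in_sg m A x \<longleftrightarrow> (\<exists>c :: nat \<Rightarrow> nat. x = int (\<Sum>i\<in>A. c i * m i))"

text \<open>t = q_t p + r_t with r_t in [1,p].\<close>
definition qq :: "nat \<Rightarrow> nat \<Rightarrow> int" where
  "qq p t = (int t - 1) div int p"

definition rr :: "nat \<Rightarrow> nat \<Rightarrow> nat" where
  "rr p t = nat ((int t - 1) mod int p) + 1"

definition gg :: "(nat \<Rightarrow> nat) \<Rightarrow> nat \<Rightarrow> nat \<Rightarrow> int" where
  "gg m p t = qq p t * int (m p) + int (m (rr p t))"

definition apery :: "(nat \<Rightarrow> nat) \<Rightarrow> nat \<Rightarrow> int set" where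
  "apery m n = {\<gamma>. in_sg m {0..n} \<gamma> \<and> \<not> in_sg m {0..n} (\<gamma> - int (m 0))}"

definition uu :: "(nat \<Rightarrow> nat) \<Rightarrow> nat \<Rightarrow> nat" where
  "uu m n = (LEAST t. gg m (n - 1) t \<notin> apery m n)"

definition upsilon :: "(nat \<Rightarrow> nat) \<Rightarrow> nat \<Rightarrow> nat" where
  "upsilon m n = (LEAST b. b \<ge> 1 \<and> in_sg m {0..n-1} (int (b * m n)))"

end

theory Submission
  imports Defs
begin

text \<open>I is a monomial ideal, so a polynomial lies in I^k exactly when each of its monomials is
divisible by a product of k generators. If x I^k \<subseteq> I^(k+1) and e is a monomial of x, then
e h^k is divisible by a product of k+1 generators for every generator h. Take h = x_n^v when
the x_n-degree of e is at least v - w, and h = x_p^(q+1) otherwise. Counting the degree in x_n,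
respectively the degree in x_p plus the degree in the middle variables x_1, ..., x_(p-1), shows
that one of the k+1 factors already divides e, so e \<in> I.\<close>

section \<open>Ideals of a subring\<close>

lemma is_ideal_Inter:
  assumes "J0 \<in> F" and ideals: "\<And>J. J \<in> F \<Longrightarrow> is_ideal R J"
  shows "is_ideal R (\<Inter>F)"
proof -
  have "\<Inter>F \<subseteq> R" "0 \<in> \<Inter>F"
    using assms unfolding is_ideal_def by blast+
  moreover have "a + b \<in> \<Inter>F" if "a \<in> \<Inter>F" "b \<in> \<Inter>F" for a b
    using that ideals unfolding is_ideal_def by blast
  moreover have "r * a \<in> \<Inter>F" if "r \<in> R" "a \<in> \<Inter>F" for r a
    using that ideals unfolding is_ideal_def by blast
  ultimately show ?thesis
    unfolding is_ideal_def by blast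
qed

lemma is_ideal_ideal_gen:
  assumes "is_ideal R R" and "G \<subseteq> R"
  shows "is_ideal R (ideal_gen R G)"
  unfolding ideal_gen_def using assms by (intro is_ideal_Inter[of R]) auto

lemma ideal_gen_mem: "x \<in> G \<Longrightarrow> x \<in> ideal_gen R G"
  unfolding ideal_gen_def by blast

lemma ideal_gen_least: "is_ideal R J \<Longrightarrow> G \<subseteq> J \<Longrightarrow> ideal_gen R G \<subseteq> J"
  unfolding ideal_gen_def by blast

lemma ideal_sum_mem:
  assumes "is_ideal R J" and "\<And>x. x \<in> A \<Longrightarrow> h x \<in> J"
  shows "sum h A \<in> J"
  using assms(2) by (induction A rule: infinite_finite_induct) (use assms(1) in \<open>auto simp: is_ideal_def\<close>)

lemma prod_list_mem_ideal_pow: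
  "length xs = k \<Longrightarrow> set xs \<subseteq> I \<Longrightarrow> prod_list xs \<in> ideal_pow R I k"
  unfolding ideal_pow_def by (rule ideal_gen_mem) blast

lemma ideal_pow_one:
  assumes "is_ideal R I"
  shows "ideal_pow R I 1 = I"
proof -
  have "{prod_list xs | xs. length xs = 1 \<and> set xs \<subseteq> I} = I"
  proof (intro equalityI subsetI)
    fix y assume "y \<in> {prod_list xs | xs. length xs = 1 \<and> set xs \<subseteq> I}"
    then show "y \<in> I"
      by (auto simp: length_Suc_conv)
  next
    fix a assume "a \<in> I"
    then show "a \<in> {prod_list xs | xs. length xs = 1 \<and> set xs \<subseteq> I}"
      by (intro CollectI exI[of _ "[a]"]) simp
  qed
  then have "ideal_pow R I 1 = ideal_gen R I"
    unfolding ideal_pow_def by simp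
  also have "\<dots> = I"
    by (intro antisym ideal_gen_least[OF assms order_refl] subsetI ideal_gen_mem)
  finally show ?thesis .
qed

lemma ideal_subset_ratliff_rush:
  assumes "is_ideal R I"
  shows "I \<subseteq> ratliff_rush R I"
proof
  fix x assume x: "x \<in> I"
  have "x * y \<in> ideal_pow R I (1 + 1)" if "y \<in> I" for y
    using prod_list_mem_ideal_pow[of "[x, y]" "1 + 1" I R] x that by simp
  moreover have "x \<in> R"
    using x assms unfolding is_ideal_def by blast
  ultimately have "x \<in> colon R (ideal_pow R I (1 + 1)) (ideal_pow R I 1)"
    unfolding colon_def ideal_pow_one[OF assms] by blast
  then show "x \<in> ratliff_rush R I"
    unfolding ratliff_rush_def by blast
qed

section \<open>Monomial ideals\<close>

lemma is_ideal_polyring: "is_ideal (polyring n) (polyring n :: 'k::field mpoly set)"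
proof -
  have add: "a + b \<in> polyring n" if "a \<in> polyring n" "b \<in> polyring n" for a b :: "'k mpoly"
    using that keys_add[of a b] unfolding polyring_def by blast
  have mult: "a * b \<in> polyring n" if "a \<in> polyring n" "b \<in> polyring n" for a b :: "'k mpoly"
  proof -
    have "Poly_Mapping.keys (x + y) \<subseteq> {0..n}"
      if "x \<in> Poly_Mapping.keys a" "y \<in> Poly_Mapping.keys b" for x y
      using \<open>a \<in> polyring n\<close> \<open>b \<in> polyring n\<close> that keys_add[of x y] unfolding polyring_def by blast
    then show ?thesis
      using keys_mult[of a b] unfolding polyring_def by blast
  qed
  have "0 \<in> polyring n"
    by (simp add: polyring_def)
  then show ?thesis
    unfolding is_ideal_def using add mult by blast
qed

abbreviation monom :: "(nat \<Rightarrow>\<^sub>0 nat) \<Rightarrow> 'k::field mpoly" where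
  "monom e \<equiv> Poly_Mapping.single e 1"

definition exp_dvd :: "(nat \<Rightarrow>\<^sub>0 nat) \<Rightarrow> (nat \<Rightarrow>\<^sub>0 nat) \<Rightarrow> bool" where
  "exp_dvd g e \<longleftrightarrow> (\<forall>i. Poly_Mapping.lookup g i \<le> Poly_Mapping.lookup e i)"

lemma exp_dvdD: "exp_dvd g e \<Longrightarrow> Poly_Mapping.lookup g i \<le> Poly_Mapping.lookup e i"
  by (simp add: exp_dvd_def)

lemma exp_dvd_single: "exp_dvd (Poly_Mapping.single i c) e \<longleftrightarrow> c \<le> Poly_Mapping.lookup e i"
  by (auto simp: exp_dvd_def lookup_single when_def)

lemma exp_dvd_refl: "exp_dvd g g"
  by (simp add: exp_dvd_def)

lemma exp_dvd_trans: "exp_dvd f g \<Longrightarrow> exp_dvd g e \<Longrightarrow> exp_dvd f e"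
  unfolding exp_dvd_def using order_trans by blast

lemma exp_dvd_add_left: "exp_dvd g e \<Longrightarrow> exp_dvd g (d + e)"
  by (simp add: exp_dvd_def lookup_add trans_le_add2)

lemma exp_dvd_add: "exp_dvd g e \<Longrightarrow> exp_dvd g' e' \<Longrightarrow> exp_dvd (g + g') (e + e')"
  by (simp add: exp_dvd_def lookup_add add_mono)

lemma exp_dvd_diff_add: "exp_dvd g e \<Longrightarrow> (e - g) + g = e"
  by (rule poly_mapping_eqI) (simp add: exp_dvd_def lookup_add lookup_minus)

lemma lookup_sum_list:
  "Poly_Mapping.lookup (sum_list gs) i = (\<Sum>g\<leftarrow>gs. Poly_Mapping.lookup g i)"
  by (induction gs) (simp_all add: lookup_add)

lemma exp_dvd_sum_list_member: "g \<in> set gs \<Longrightarrow> exp_dvd g (sum_list gs)"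
  unfolding exp_dvd_def lookup_sum_list by (simp add: member_le_sum_list)

definition monomial_ideal :: "nat \<Rightarrow> (nat \<Rightarrow>\<^sub>0 nat) set \<Rightarrow> 'k::field mpoly set" where
  "monomial_ideal n G = {f \<in> polyring n. \<forall>e \<in> Poly_Mapping.keys f. \<exists>g\<in>G. exp_dvd g e}"

lemma is_ideal_monomial_ideal: "is_ideal (polyring n) (monomial_ideal n G :: 'k::field mpoly set)"
proof -
  have R: "is_ideal (polyring n) (polyring n :: 'k mpoly set)"
    by (rule is_ideal_polyring)
  have sub: "monomial_ideal n G \<subseteq> (polyring n :: 'k mpoly set)"
    unfolding monomial_ideal_def by blast
  have zero: "0 \<in> (monomial_ideal n G :: 'k mpoly set)"
    by (simp add: monomial_ideal_def polyring_def)
  have add: "a + b \<in> monomial_ideal n G"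
    if a: "a \<in> monomial_ideal n G" and b: "b \<in> monomial_ideal n G" for a b :: "'k mpoly"
  proof -
    have "a + b \<in> polyring n"
      using a b sub R unfolding is_ideal_def by blast
    moreover have "\<exists>g\<in>G. exp_dvd g e" if "e \<in> Poly_Mapping.keys (a + b)" for e
      using that keys_add[of a b] a b unfolding monomial_ideal_def by blast
    ultimately show ?thesis
      by (simp add: monomial_ideal_def)
  qed
  have mult: "c * a \<in> monomial_ideal n G"
    if c: "c \<in> polyring n" and a: "a \<in> monomial_ideal n G" for c a :: "'k mpoly"
  proof -
    have "c * a \<in> polyring n"
      using c a sub R unfolding is_ideal_def by blast
    moreover have "\<exists>g\<in>G. exp_dvd g e" if e: "e \<in> Poly_Mapping.keys (c * a)" for e
    proof -
      obtain x y where "e = x + y" "y \<in> Poly_Mapping.keys a"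
        using e keys_mult[of c a] by blast
      then show ?thesis
        using a exp_dvd_add_left unfolding monomial_ideal_def by blast
    qed
    ultimately show ?thesis
      by (simp add: monomial_ideal_def)
  qed
  show ?thesis
    unfolding is_ideal_def using sub zero add mult by blast
qed

lemma poly_mapping_sum_singles:
  "(\<Sum>e \<in> Poly_Mapping.keys f. Poly_Mapping.single e (Poly_Mapping.lookup f e)) = f"
  by (rule poly_mapping_eqI) (simp add: lookup_sum lookup_single when_def in_keys_iff)

lemma ideal_gen_monomials:
  assumes "\<And>g. g \<in> G \<Longrightarrow> Poly_Mapping.keys g \<subseteq> {0..n}"
  shows "ideal_gen (polyring n) (monom ` G) = (monomial_ideal n G :: 'k::field mpoly set)"
proof
  have "monom g \<in> (monomial_ideal n G :: 'k mpoly set)" if "g \<in> G" for g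
    using assms[OF that] that exp_dvd_refl by (force simp: monomial_ideal_def polyring_def)
  then have "monom ` G \<subseteq> (monomial_ideal n G :: 'k mpoly set)"
    by blast
  then show "ideal_gen (polyring n) (monom ` G) \<subseteq> (monomial_ideal n G :: 'k mpoly set)"
    by (rule ideal_gen_least[OF is_ideal_monomial_ideal])
next
  let ?J = "ideal_gen (polyring n) (monom ` G) :: 'k mpoly set"
  have "monom ` G \<subseteq> (polyring n :: 'k mpoly set)"
    using assms by (simp add: polyring_def image_subset_iff)
  then have J: "is_ideal (polyring n) ?J"
    by (intro is_ideal_ideal_gen is_ideal_polyring)
  show "monomial_ideal n G \<subseteq> ?J"
  proof
    fix f :: "'k mpoly" assume f: "f \<in> monomial_ideal n G"
    have "Poly_Mapping.single e (Poly_Mapping.lookup f e) \<in> ?J" if e: "e \<in> Poly_Mapping.keys f" for e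
    proof -
      obtain g where g: "g \<in> G" "exp_dvd g e"
        using f e unfolding monomial_ideal_def by blast
      have "Poly_Mapping.keys (e - g) \<subseteq> Poly_Mapping.keys e"
        by (auto simp: in_keys_iff lookup_minus)
      with f e have "Poly_Mapping.single (e - g) (Poly_Mapping.lookup f e) \<in> polyring n"
        by (auto simp: monomial_ideal_def polyring_def)
      moreover have "monom g \<in> ?J"
        using g(1) by (intro ideal_gen_mem imageI)
      ultimately have "Poly_Mapping.single (e - g) (Poly_Mapping.lookup f e) * monom g \<in> ?J"
        using J by (simp add: is_ideal_def)
      then show ?thesis
        by (simp add: mult_single exp_dvd_diff_add[OF g(2)])
    qed
    then have "(\<Sum>e \<in> Poly_Mapping.keys f. Poly_Mapping.single e (Poly_Mapping.lookup f e)) \<in> ?J"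
      by (rule ideal_sum_mem[OF J])
    then show "f \<in> ?J"
      by (simp only: poly_mapping_sum_singles)
  qed
qed

definition exp_products :: "(nat \<Rightarrow>\<^sub>0 nat) set \<Rightarrow> nat \<Rightarrow> (nat \<Rightarrow>\<^sub>0 nat) set" where
  "exp_products G k = {sum_list gs | gs. length gs = k \<and> set gs \<subseteq> G}"

lemma exp_products_Suc:
  assumes "g \<in> G" and "g' \<in> exp_products G k"
  shows "g + g' \<in> exp_products G (Suc k)"
proof -
  obtain gs where "g' = sum_list gs" "length gs = k" "set gs \<subseteq> G"
    using assms(2) unfolding exp_products_def by blast
  then show ?thesis
    using assms(1) unfolding exp_products_def by (intro CollectI exI[of _ "g # gs"]) simp
qed

lemma prod_list_mem_monomial_ideal:
  "set xs \<subseteq> monomial_ideal n G \<Longrightarrow> prod_list xs \<in> monomial_ideal n (exp_products G (length xs))"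
proof (induction xs)
  case Nil
  have "0 \<in> exp_products G 0"
    unfolding exp_products_def by force
  then have "\<exists>g\<in>exp_products G 0. exp_dvd g 0"
    using exp_dvd_refl by blast
  then show ?case
    by (simp add: monomial_ideal_def polyring_def flip: single_one)
next
  case (Cons x xs)
  then have x: "x \<in> monomial_ideal n G"
    and xs: "prod_list xs \<in> monomial_ideal n (exp_products G (length xs))" by auto
  have "\<exists>g \<in> exp_products G (length (x # xs)). exp_dvd g (a + b)"
    if "a \<in> Poly_Mapping.keys x" "b \<in> Poly_Mapping.keys (prod_list xs)" for a b
    using that x xs exp_products_Suc exp_dvd_add unfolding monomial_ideal_def by fastforce
  moreover have "x * prod_list xs \<in> polyring n"
    using x xs is_ideal_polyring unfolding monomial_ideal_def is_ideal_def by blast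
  ultimately show ?case
    using keys_mult[of x "prod_list xs"] unfolding monomial_ideal_def by auto
qed

lemma ideal_pow_monomial_ideal_subset:
  "ideal_pow (polyring n) (monomial_ideal n G) k \<subseteq> (monomial_ideal n (exp_products G k) :: 'k::field mpoly set)"
  unfolding ideal_pow_def
  by (rule ideal_gen_least[OF is_ideal_monomial_ideal]) (auto dest: prod_list_mem_monomial_ideal)

lemma monom_power: "(monom g :: 'k::field mpoly) ^ k = monom (sum_list (replicate k g))"
  by (induction k) (simp_all add: mult_single)

lemma sum_list_replicate_single:
  "sum_list (replicate k (Poly_Mapping.single i c)) = Poly_Mapping.single i (k * c)"
  by (induction k) (simp_all add: single_add)

lemma keys_mult_monom:
  assumes "e \<in> Poly_Mapping.keys (f :: 'k::field mpoly)"
  shows "e + d \<in> Poly_Mapping.keys (f * monom d)"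
proof -
  have "f * monom d = (\<Sum>x \<in> Poly_Mapping.keys f. Poly_Mapping.single (x + d) (Poly_Mapping.lookup f x))"
    by (subst (1) poly_mapping_sum_singles[symmetric]) (simp add: sum_distrib_right mult_single)
  then have "Poly_Mapping.lookup (f * monom d) (e + d) = Poly_Mapping.lookup f e"
    using assms by (simp add: lookup_sum lookup_single when_def)
  with assms show ?thesis
    by (simp add: in_keys_iff)
qed

lemma ratliff_rush_monomial_ideal:
  assumes keys: "\<And>g. g \<in> G \<Longrightarrow> Poly_Mapping.keys g \<subseteq> {0..n}"
    and cancel: "\<And>e. \<exists>h\<in>G. \<forall>k. (\<exists>g\<in>exp_products G (Suc k). exp_dvd g (e + sum_list (replicate k h)))
                   \<longrightarrow> (\<exists>g\<in>G. exp_dvd g e)"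
  shows "ratliff_rush (polyring n) (ideal_gen (polyring n) (monom ` G))
       = (ideal_gen (polyring n) (monom ` G) :: 'k::field mpoly set)"
proof -
  let ?R = "polyring n :: 'k mpoly set"
  let ?I = "monomial_ideal n G :: 'k mpoly set"
  have I: "ideal_gen ?R (monom ` G) = ?I"
    by (rule ideal_gen_monomials[OF keys])
  have "x \<in> ?I" if x: "x \<in> colon ?R (ideal_pow ?R ?I (k + 1)) (ideal_pow ?R ?I k)" for x k
  proof -
    have "\<exists>g\<in>G. exp_dvd g e" if e: "e \<in> Poly_Mapping.keys x" for e
    proof -
      obtain h where h: "h \<in> G" and cancel_h: "\<forall>k. (\<exists>g\<in>exp_products G (Suc k).
          exp_dvd g (e + sum_list (replicate k h))) \<longrightarrow> (\<exists>g\<in>G. exp_dvd g e)"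
        using cancel by blast
      have "monom h \<in> ?I"
        unfolding I[symmetric] using h by (intro ideal_gen_mem imageI)
      then have "monom h ^ k \<in> ideal_pow ?R ?I k"
        using prod_list_mem_ideal_pow[of "replicate k (monom h)" k ?I ?R] by (simp add: set_replicate_conv_if)
      then have "x * monom (sum_list (replicate k h)) \<in> monomial_ideal n (exp_products G (k + 1))"
        using x ideal_pow_monomial_ideal_subset unfolding colon_def monom_power by blast
      moreover have "e + sum_list (replicate k h) \<in> Poly_Mapping.keys (x * monom (sum_list (replicate k h)))"
        by (rule keys_mult_monom[OF e])
      ultimately have "\<exists>g\<in>exp_products G (Suc k). exp_dvd g (e + sum_list (replicate k h))"
        unfolding monomial_ideal_def by simp
      then show ?thesis
        using cancel_h by blast
    qed
    then show ?thesis
      using x unfolding colon_def monomial_ideal_def by blast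
  qed
  then have "ratliff_rush ?R ?I \<subseteq> ?I"
    unfolding ratliff_rush_def by blast
  then show ?thesis
    using ideal_subset_ratliff_rush[OF is_ideal_monomial_ideal] unfolding I by blast
qed

section \<open>The initial ideal of the monomial curve\<close>

text \<open>Exponent vectors of the generators x_i x_p^Q, x_j x_p^S x_n^b, x_n^v and x_i x_j; in the
  theorem Q = q, S = q - q_z - \<epsilon>, b = v - w, and Js is the admissible range of j.\<close>

definition xp_gens :: "nat \<Rightarrow> nat \<Rightarrow> nat \<Rightarrow> (nat \<Rightarrow>\<^sub>0 nat) set" where
  "xp_gens p Q r = {Poly_Mapping.single i 1 + Poly_Mapping.single p Q | i. r \<le> i \<and> i \<le> p}"

definition xn_gens :: "nat \<Rightarrow> nat \<Rightarrow> nat \<Rightarrow> nat \<Rightarrow> nat set \<Rightarrow> (nat \<Rightarrow>\<^sub>0 nat) set" where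
  "xn_gens p S n b Js =
    {Poly_Mapping.single j 1 + Poly_Mapping.single p S + Poly_Mapping.single n b | j. j \<in> Js}"

definition quad_gens :: "nat \<Rightarrow> (nat \<Rightarrow>\<^sub>0 nat) set" where
  "quad_gens p = {Poly_Mapping.single i 1 + Poly_Mapping.single j 1 | i j. 1 \<le> i \<and> i \<le> j \<and> j \<le> p - 1}"

definition initial_gens ::
    "nat \<Rightarrow> nat \<Rightarrow> nat \<Rightarrow> nat \<Rightarrow> nat \<Rightarrow> nat \<Rightarrow> nat \<Rightarrow> nat set \<Rightarrow> (nat \<Rightarrow>\<^sub>0 nat) set" where
  "initial_gens p n Q r S b v Js =
    xp_gens p Q r \<union> xn_gens p S n b Js \<union> {Poly_Mapping.single n v} \<union> quad_gens p"

lemma keys_initial_gens: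
  assumes "p < n" "Js \<subseteq> {..p}" "g \<in> initial_gens p n Q r S b v Js"
  shows "Poly_Mapping.keys g \<subseteq> {0..n}"
proof -
  have lookup_beyond: "Poly_Mapping.lookup g i = 0" if "n < i" for i
    using assms that
    by (auto simp: initial_gens_def xp_gens_def xn_gens_def quad_gens_def lookup_add lookup_single when_def)
  show ?thesis
  proof
    fix i assume "i \<in> Poly_Mapping.keys g"
    then have "\<not> n < i"
      using lookup_beyond by (auto simp: in_keys_iff)
    then show "i \<in> {0..n}"
      by simp
  qed
qed

lemma lookup_n_xn_gens:
  "p < n \<Longrightarrow> Js \<subseteq> {..p} \<Longrightarrow> g \<in> xn_gens p S n b Js \<Longrightarrow> Poly_Mapping.lookup g n = b"
  by (auto simp: xn_gens_def lookup_add lookup_single when_def)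

lemma lookup_n_xp_quad_gens:
  "p < n \<Longrightarrow> g \<in> xp_gens p Q r \<union> quad_gens p \<Longrightarrow> Poly_Mapping.lookup g n = 0"
  by (auto simp: xp_gens_def quad_gens_def lookup_add lookup_single when_def)

lemma initial_gens_cases:
  assumes "p < n" "Js \<subseteq> {..p}" "g \<in> initial_gens p n Q r S b v Js"
  obtains "g \<in> xn_gens p S n b Js" "Poly_Mapping.lookup g n = b"
    | "g = Poly_Mapping.single n v"
    | "g \<in> xp_gens p Q r \<union> quad_gens p" "Poly_Mapping.lookup g n = 0"
proof -
  consider "g \<in> xn_gens p S n b Js" | "g = Poly_Mapping.single n v" | "g \<in> xp_gens p Q r \<union> quad_gens p"
    using assms(3) unfolding initial_gens_def by blast
  then show thesis
  proof cases
    case 1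
    then show thesis
      using that(1) lookup_n_xn_gens[OF assms(1,2) 1] by blast
  next
    case 2
    then show thesis
      using that(2) by blast
  next
    case 3
    then show thesis
      using that(3) lookup_n_xp_quad_gens[OF assms(1) 3] by blast
  qed
qed

definition mid_deg :: "nat \<Rightarrow> (nat \<Rightarrow>\<^sub>0 nat) \<Rightarrow> nat" where
  "mid_deg p e = (\<Sum>i\<in>{1..<p}. Poly_Mapping.lookup e i)"

lemma mid_deg_add: "mid_deg p (a + b) = mid_deg p a + mid_deg p b"
  by (simp add: mid_deg_def lookup_add sum.distrib)

lemma mid_deg_single: "mid_deg p (Poly_Mapping.single i c) = (if i \<in> {1..<p} then c else 0)"
  by (simp add: mid_deg_def lookup_single when_def)

lemma mid_deg_sum_list: "mid_deg p (sum_list gs) = (\<Sum>g\<leftarrow>gs. mid_deg p g)"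
proof (induction gs)
  case Nil
  then show ?case by (simp add: mid_deg_def)
next
  case (Cons g gs)
  then show ?case by (simp add: mid_deg_add)
qed

lemma mid_deg_mono: "exp_dvd a e \<Longrightarrow> mid_deg p a \<le> mid_deg p e"
  unfolding mid_deg_def by (rule sum_mono) (rule exp_dvdD)

lemma mid_deg_quad_gens: "g \<in> quad_gens p \<Longrightarrow> mid_deg p g = 2"
  by (auto simp: quad_gens_def mid_deg_add mid_deg_single)

lemma quad_gens_dvd_if_mid_deg:
  assumes "2 \<le> mid_deg p e"
  shows "\<exists>g\<in>quad_gens p. exp_dvd g e"
proof -
  have mid_pos: "\<exists>i\<in>{1..<p}. 1 \<le> Poly_Mapping.lookup x i" if "1 \<le> mid_deg p x" for x
  proof (rule ccontr)
    assume "\<not> (\<exists>i\<in>{1..<p}. 1 \<le> Poly_Mapping.lookup x i)"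
    then have "mid_deg p x = 0"
      unfolding mid_deg_def by (intro sum.neutral) (auto simp: not_le)
    with that show False by simp
  qed
  obtain i where i: "i \<in> {1..<p}" "1 \<le> Poly_Mapping.lookup e i"
    using mid_pos[of e] assms by force
  define e' where "e' = e - Poly_Mapping.single i 1"
  have "exp_dvd (Poly_Mapping.single i 1) e"
    using i(2) by (simp add: exp_dvd_single)
  then have e_eq: "e' + Poly_Mapping.single i 1 = e"
    unfolding e'_def by (rule exp_dvd_diff_add)
  then have "mid_deg p e = mid_deg p e' + 1"
    using i(1) by (simp flip: e_eq add: mid_deg_add mid_deg_single)
  then obtain j where j: "j \<in> {1..<p}" "1 \<le> Poly_Mapping.lookup e' j"
    using mid_pos[of e'] assms by force
  have "exp_dvd (Poly_Mapping.single j 1 + Poly_Mapping.single i 1) e"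
    using exp_dvd_add[OF _ exp_dvd_refl] j(2) e_eq by (metis exp_dvd_single)
  moreover have "Poly_Mapping.single j 1 + Poly_Mapping.single i 1 \<in> quad_gens p"
  proof -
    have "Poly_Mapping.single j 1 + Poly_Mapping.single i 1
        = Poly_Mapping.single (min i j) 1 + (Poly_Mapping.single (max i j) 1 :: nat \<Rightarrow>\<^sub>0 nat)"
      by (cases "i \<le> j") (simp_all add: min_def max_def add.commute)
    then show ?thesis
      unfolding quad_gens_def using i(1) j(1) by fastforce
  qed
  ultimately show ?thesis by blast
qed

lemma initial_gens_cancel_xn_power:
  assumes "p < n" "Js \<subseteq> {..p}"
    and gs: "set gs \<subseteq> initial_gens p n Q r S b v Js" "length gs = Suc k"
    and e_n: "b \<le> Poly_Mapping.lookup e n"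
    and dvd: "exp_dvd (sum_list gs) (e + Poly_Mapping.single n (k * v))"
  shows "\<exists>g\<in>initial_gens p n Q r S b v Js. exp_dvd g e"
proof (cases "\<forall>g\<in>set gs. g = Poly_Mapping.single n v")
  case True
  then have "sum_list gs = Poly_Mapping.single n (Suc k * v)"
    using replicate_length_same[OF True] gs(2) by (metis sum_list_replicate_single)
  then have "v \<le> Poly_Mapping.lookup e n"
    using exp_dvdD[OF dvd, of n] by (simp add: lookup_add)
  then show ?thesis
    by (auto simp: initial_gens_def exp_dvd_single)
next
  case False
  then obtain g where g: "g \<in> set gs" "g \<noteq> Poly_Mapping.single n v" by blast
  then have g_gen: "g \<in> initial_gens p n Q r S b v Js"
    using gs(1) by blast
  have g_n: "Poly_Mapping.lookup g n \<le> b"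
    using g(2) by (cases rule: initial_gens_cases[OF assms(1,2) g_gen]) auto
  have g_dvd: "exp_dvd g (e + Poly_Mapping.single n (k * v))"
    using exp_dvd_trans[OF exp_dvd_sum_list_member[OF g(1)] dvd] .
  have "exp_dvd g e"
    unfolding exp_dvd_def
  proof
    fix i
    show "Poly_Mapping.lookup g i \<le> Poly_Mapping.lookup e i"
      using exp_dvdD[OF g_dvd, of i] g_n e_n
      by (cases "i = n") (auto simp: lookup_add lookup_single when_def)
  qed
  then show ?thesis
    using g_gen by blast
qed

lemma xp_gens_weight:
  "1 \<le> r \<Longrightarrow> g \<in> xp_gens p Q r \<Longrightarrow> Poly_Mapping.lookup g p + mid_deg p g = Q + 1"
  by (auto simp: xp_gens_def lookup_add lookup_single mid_deg_add mid_deg_single)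

text \<open>The x_p-degree plus the middle degree is Q + 1 both on the generators and on the cancelled
  factor x_p^(Q+1); comparing this weight on both sides leaves weight Q + 1 for e.\<close>

lemma xp_gens_cancel_xp_power:
  assumes r: "1 \<le> r" "r \<le> p"
    and gs: "set gs \<subseteq> xp_gens p Q r" "length gs = Suc k"
    and mid_e: "mid_deg p e \<le> 1"
    and dvd: "exp_dvd (sum_list gs) (e + Poly_Mapping.single p (k * (Q + 1)))"
  shows "\<exists>g\<in>xp_gens p Q r. exp_dvd g e"
proof -
  have mid: "mid_deg p (sum_list gs) \<le> 1"
    using mid_deg_mono[OF dvd, of p] mid_e by (simp add: mid_deg_add mid_deg_single)
  have "Poly_Mapping.lookup (sum_list gs) p + mid_deg p (sum_list gs)
      = (\<Sum>g\<leftarrow>gs. Poly_Mapping.lookup g p + mid_deg p g)"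
    by (simp add: lookup_sum_list mid_deg_sum_list sum_list_addf)
  also have "\<dots> = (\<Sum>g\<leftarrow>gs. Q + 1)"
    using gs(1) xp_gens_weight[OF r(1)] by (intro arg_cong[where f = sum_list] map_cong) auto
  also have "\<dots> = Suc k * (Q + 1)"
    using gs(2) by (simp add: sum_list_triv)
  finally have "Poly_Mapping.lookup (sum_list gs) p + mid_deg p (sum_list gs) = Suc k * (Q + 1)" .
  moreover have "Poly_Mapping.lookup (sum_list gs) p \<le> Poly_Mapping.lookup e p + k * (Q + 1)"
    using exp_dvdD[OF dvd, of p] by (simp add: lookup_add)
  ultimately have e_p: "Q + 1 \<le> Poly_Mapping.lookup e p + mid_deg p (sum_list gs)"
    by simp
  show ?thesis
  proof (cases "mid_deg p (sum_list gs) = 0")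
    case True
    then have "exp_dvd (Poly_Mapping.single p 1 + Poly_Mapping.single p Q) e"
      using e_p by (simp add: exp_dvd_single flip: single_add)
    moreover have "Poly_Mapping.single p 1 + Poly_Mapping.single p Q \<in> xp_gens p Q r"
      using r unfolding xp_gens_def by blast
    ultimately show ?thesis by blast
  next
    case False
    then obtain g where g: "g \<in> set gs" "mid_deg p g \<noteq> 0"
      by (auto simp: mid_deg_sum_list)
    then obtain i where g_eq: "g = Poly_Mapping.single i 1 + Poly_Mapping.single p Q" "i \<in> {1..<p}"
      using gs(1) unfolding xp_gens_def by (auto simp: mid_deg_add mid_deg_single split: if_splits)
    have "1 \<le> Poly_Mapping.lookup e i"
      using exp_dvdD[OF exp_dvd_trans[OF exp_dvd_sum_list_member[OF g(1)] dvd], of i] g_eq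
      by (simp add: lookup_add lookup_single when_def)
    moreover have "Q \<le> Poly_Mapping.lookup e p"
      using e_p mid False by simp
    ultimately have "exp_dvd g e"
      using g_eq by (auto simp: exp_dvd_def lookup_add lookup_single when_def)
    then show ?thesis
      using g(1) gs(1) by blast
  qed
qed

lemma initial_gens_cancel_xp_power:
  assumes r: "1 \<le> r" "r \<le> p" and "p < n" "Js \<subseteq> {..p}" "b \<le> v"
    and gs: "set gs \<subseteq> initial_gens p n Q r S b v Js" "length gs = Suc k"
    and e_n: "Poly_Mapping.lookup e n < b"
    and dvd: "exp_dvd (sum_list gs) (e + Poly_Mapping.single p (k * (Q + 1)))"
  shows "\<exists>g\<in>initial_gens p n Q r S b v Js. exp_dvd g e"
proof (cases "2 \<le> mid_deg p e")
  case True
  then show ?thesis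
    using quad_gens_dvd_if_mid_deg unfolding initial_gens_def by blast
next
  case False
  have "g \<in> xp_gens p Q r" if g: "g \<in> set gs" for g
  proof -
    have g_gen: "g \<in> initial_gens p n Q r S b v Js"
      using g gs(1) by blast
    have g_dvd: "exp_dvd g (e + Poly_Mapping.single p (k * (Q + 1)))"
      using exp_dvd_trans[OF exp_dvd_sum_list_member[OF g] dvd] .
    have g_n: "Poly_Mapping.lookup g n < b"
      using exp_dvdD[OF g_dvd, of n] e_n \<open>p < n\<close> by (simp add: lookup_add lookup_single)
    have "mid_deg p g \<le> 1"
      using mid_deg_mono[OF g_dvd, of p] False by (simp add: mid_deg_add mid_deg_single)
    then have "g \<notin> quad_gens p"
      using mid_deg_quad_gens by force
    then show ?thesis
      using g_n \<open>b \<le> v\<close> by (cases rule: initial_gens_cases[OF \<open>p < n\<close> \<open>Js \<subseteq> {..p}\<close> g_gen]) auto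
  qed
  then have "\<exists>g\<in>xp_gens p Q r. exp_dvd g e"
    using xp_gens_cancel_xp_power[OF r _ gs(2) _ dvd] False by auto
  then show ?thesis
    unfolding initial_gens_def by blast
qed

lemma ratliff_rush_initial_ideal:
  assumes "1 \<le> r" "r \<le> p" "p < n" "Js \<subseteq> {..p}" "b \<le> v"
  shows "ratliff_rush (polyring n) (ideal_gen (polyring n) (monom ` initial_gens p n Q r S b v Js))
       = (ideal_gen (polyring n) (monom ` initial_gens p n Q r S b v Js) :: 'k::field mpoly set)"
proof (rule ratliff_rush_monomial_ideal)
  show "Poly_Mapping.keys g \<subseteq> {0..n}" if "g \<in> initial_gens p n Q r S b v Js" for g
    using keys_initial_gens assms that by blast
next
  fix e
  let ?G = "initial_gens p n Q r S b v Js"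
  show "\<exists>h\<in>?G. \<forall>k. (\<exists>g\<in>exp_products ?G (Suc k). exp_dvd g (e + sum_list (replicate k h)))
      \<longrightarrow> (\<exists>g\<in>?G. exp_dvd g e)"
  proof (cases "b \<le> Poly_Mapping.lookup e n")
    case True
    have "Poly_Mapping.single n v \<in> ?G"
      unfolding initial_gens_def by blast
    moreover have "\<exists>g\<in>?G. exp_dvd g e"
      if "\<exists>g\<in>exp_products ?G (Suc k). exp_dvd g (e + sum_list (replicate k (Poly_Mapping.single n v)))"
      for k
      using that initial_gens_cancel_xn_power[OF assms(3,4) _ _ True]
      by (auto simp: exp_products_def sum_list_replicate_single)
    ultimately show ?thesis by blast
  next
    case False
    have "Poly_Mapping.single p 1 + Poly_Mapping.single p Q \<in> ?G"
      using assms(1,2) unfolding initial_gens_def xp_gens_def by blast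
    then have "Poly_Mapping.single p (Q + 1) \<in> ?G"
      by (simp flip: single_add)
    moreover have "\<exists>g\<in>?G. exp_dvd g e"
      if "\<exists>g\<in>exp_products ?G (Suc k). exp_dvd g (e + sum_list (replicate k (Poly_Mapping.single p (Q + 1))))"
      for k
      using that initial_gens_cancel_xp_power[OF assms] False
      by (auto simp: exp_products_def sum_list_replicate_single not_le)
    ultimately show ?thesis by blast
  qed
qed

lemma var_power: "(var i :: 'k::field mpoly) ^ a = monom (Poly_Mapping.single i a)"
  by (simp add: var_def monom_power sum_list_replicate_single)

lemma initial_gens_image:
  "{var i * var p ^ Q | i. r \<le> i \<and> i \<le> p}
    \<union> {var j * var p ^ S * var n ^ b | j. P j}
    \<union> {var n ^ v}
    \<union> {var i * var j | i j. 1 \<le> i \<and> i \<le> j \<and> j \<le> p - 1}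
   = (monom ` initial_gens p n Q r S b v {j. P j} :: 'k::field mpoly set)"
proof -
  have xp: "(var i :: 'k mpoly) * var p ^ Q = monom (Poly_Mapping.single i 1 + Poly_Mapping.single p Q)" for i
    by (simp only: var_power) (simp add: var_def mult_single)
  have xn: "(var j :: 'k mpoly) * var p ^ S * var n ^ b
      = monom (Poly_Mapping.single j 1 + Poly_Mapping.single p S + Poly_Mapping.single n b)" for j
    by (simp only: var_power) (simp add: var_def mult_single)
  have quad: "(var i :: 'k mpoly) * var j = monom (Poly_Mapping.single i 1 + Poly_Mapping.single j 1)" for i j
    by (simp add: var_def mult_single)
  have "{(var i :: 'k mpoly) * var p ^ Q | i. r \<le> i \<and> i \<le> p} = monom ` xp_gens p Q r"
    unfolding xp_gens_def xp by blast
  moreover have "{(var j :: 'k mpoly) * var p ^ S * var n ^ b | j. P j} = monom ` xn_gens p S n b {j. P j}"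
    unfolding xn_gens_def xn by blast
  moreover have "{(var n :: 'k mpoly) ^ v} = monom ` {Poly_Mapping.single n v}"
    by (simp add: var_power)
  moreover have "{(var i :: 'k mpoly) * var j | i j. 1 \<le> i \<and> i \<le> j \<and> j \<le> p - 1} = monom ` quad_gens p"
    unfolding quad_gens_def quad by blast
  ultimately show ?thesis
    unfolding initial_gens_def image_Un by argo
qed

lemma rr_bounds:
  assumes "0 < p"
  shows "1 \<le> rr p t" and "rr p t \<le> p"
proof -
  have "nat ((int t - 1) mod int p) < p"
    using assms by (simp add: nat_less_iff)
  then show "1 \<le> rr p t" "rr p t \<le> p"
    unfolding rr_def by simp_all
qed

theorem mainTheorem1:
  fixes n :: nat and m :: "nat \<Rightarrow> nat" and d :: nat
    and w z :: nat and lam mu :: int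
  assumes n2: "n \<ge> 2"
    and arith: "d > 0" "\<forall>i\<le>n - 1. m i = m 0 + i * d"
    and pos: "\<forall>i\<le>n. m i > 0"
    and gcd1: "Gcd (m ` {0..n}) = 1"
    and minimal: "\<forall>i\<le>n. \<not> in_sg m ({0..n} - {i}) (int (m i))"
    and w_z: "w \<le> upsilon m n - 1" "z \<le> uu m n - 1"
    and lam_mu: "lam \<ge> 1" "mu \<ge> 0"
    and eq1: "gg m (n - 1) (uu m n) = lam * int (m 0) + int w * int (m n)"
    and eq2: "int (upsilon m n * m n) = mu * int (m 0) + gg m (n - 1) z"
  shows
    "let p = n - 1; u = uu m n; v = upsilon m n;
         q = qq p u; r = rr p u; qz = qq p z; rz = rr p z;
         \<epsilon> = (if r > rz then 0 else 1 :: nat);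
         I = ideal_gen (polyring n :: 'k::field mpoly set)
              ({var i * var p ^ nat q | i. r \<le> i \<and> i \<le> p}
             \<union> {var j * var p ^ nat (q - qz - int \<epsilon>) * var n ^ (v - w) | j.
                    int (\<epsilon> * p + r) - int rz \<le> int j \<and> j \<le> p}
             \<union> {var n ^ v}
             \<union> {var i * var j | i j. 1 \<le> i \<and> i \<le> j \<and> j \<le> p - 1})
     in ratliff_rush (polyring n) I = I"
proof -
  have p: "0 < n - 1" "n - 1 < n"
    using n2 by auto
  show ?thesis
    unfolding Let_def initial_gens_image
    by (intro ratliff_rush_initial_ideal) (use p rr_bounds in auto)
qed

end
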